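(* Let $G$ be a connected graph, let $e=\{x,y\}$ and $f=\{u,v\}$ be edges of $G$, and consider the edges $e_{\bar{x}}=\{\bar{x},\overline{xy}\}$ and $f_{\bar{u}}=\{\bar{u},\overline{uv}\}$ of the full subdivision $S(G)$. If $e_{\bar{x}}\,\Theta_{S(G)}\,f_{\bar{u}}$, then $e\,\Theta_G\,f$.
   Context: For a connected graph $H$ with shortest-path distance $d_H$, two edges $\{x,y\}$ and $\{u,v\}$ of $H$ are in relation $\Theta_H$ (the Djoković–Winkler relation) if $d_H(x,u)+d_H(y,v)\neq d_H(x,v)+d_H(y,u)$. The full subdivision $S(G)$ of $G$ is obtained by subdividing every edge of $G$ exactly once; the vertex of $S(G)$ corresponding to a vertex $x$ of $G$ is denoted $\bar{x}$, and the new vertex subdividing the edge $\{x,y\}$ is denoted $\overline{xy}$. For an edge $e=\{x,y\}$ of $G$, $e_{\bar{x}}$ denotes the edge $\{\bar{x},\overline{xy}\}$ of $S(G)$ and $e_{\bar{y}}$ the edge $\{\bar{y},\overline{xy}\}$. *)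

theory Defs
  imports Main
begin

definition graph :: "'a set \<Rightarrow> 'a set set \<Rightarrow> bool" where
  "graph V E \<longleftrightarrow> (\<forall>e\<in>E. \<exists>x y. x \<noteq> y \<and> x \<in> V \<and> y \<in> V \<and> e = {x, y})"

definition walk :: "'a set \<Rightarrow> 'a set set \<Rightarrow> 'a list \<Rightarrow> 'a \<Rightarrow> 'a \<Rightarrow> nat \<Rightarrow> bool" where
  "walk V E p a b n \<longleftrightarrow> length p = Suc n \<and> p ! 0 = a \<and> p ! n = b \<and> set p \<subseteq> V \<and>
     (\<forall>i<n. {p ! i, p ! Suc i} \<in> E)"

definition connected :: "'a set \<Rightarrow> 'a set set \<Rightarrow> bool" where
  "connected V E \<longleftrightarrow> V \<noteq> {} \<and> (\<forall>a\<in>V. \<forall>b\<in>V. \<exists>p n. walk V E p a b n)"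

definition dist :: "'a set \<Rightarrow> 'a set set \<Rightarrow> 'a \<Rightarrow> 'a \<Rightarrow> nat" where
  "dist V E a b = (LEAST n. \<exists>p. walk V E p a b n)"

definition Theta :: "'a set \<Rightarrow> 'a set set \<Rightarrow> 'a set \<Rightarrow> 'a set \<Rightarrow> bool" where
  "Theta V E e f \<longleftrightarrow> e \<in> E \<and> f \<in> E \<and>
     (\<exists>x y u v. e = {x, y} \<and> f = {u, v} \<and>
        dist V E x u + dist V E y v \<noteq> dist V E x v + dist V E y u)"

text \<open>Full subdivision S(G): vertex x of G is Inl x, the subdivision vertex of edge e is Inr e.\<close>
definition subdiv_V :: "'a set \<Rightarrow> 'a set set \<Rightarrow> ('a + 'a set) set" where
  "subdiv_V V E = Inl ` V \<union> Inr ` E"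

definition subdiv_E :: "'a set \<Rightarrow> 'a set set \<Rightarrow> ('a + 'a set) set set" where
  "subdiv_E V E = {{Inl x, Inr e} | x e. e \<in> E \<and> x \<in> e}"

end

(*
  From an original vertex w the distance is
  2 d(w,z) to z and 2 min (d(w,p), d(w,q)) + 1 to the midpoint of the edge pq: this candidate
  is realised by a walk and changes by at most 1 along every edge of S(G), so it cannot be
  beaten. Between two distinct midpoints a shortest walk ends through an endpoint of the target
  edge, so that distance is one more than the least distance from the source midpoint to such
  an endpoint. With a = d(x,u), b = d(x,v), c = d(y,u), d = d(y,v), the relation between the
  half-edges at x and u in S(G) therefore reads a + min(a,b,c,d) /= min(a,b) + min(a,c), and
  this fails whenever a + d = b + c, i.e. whenever xy and uv are not in relation in G.
*)
theory Submission
  imports Defs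
begin

definition has_walk :: "'a set \<Rightarrow> 'a set set \<Rightarrow> 'a \<Rightarrow> 'a \<Rightarrow> nat \<Rightarrow> bool" where
  "has_walk V E a b n \<longleftrightarrow> (\<exists>p. walk V E p a b n)"

lemma has_walk_0 [simp]: "has_walk V E a b 0 \<longleftrightarrow> a = b \<and> a \<in> V"
  unfolding has_walk_def walk_def
  by (auto simp: length_Suc_conv intro: exI[of _ "[a]"])

lemma has_walk_Suc:
  "has_walk V E a b (Suc n) \<longleftrightarrow> (\<exists>c. has_walk V E a c n \<and> {c, b} \<in> E \<and> b \<in> V)"
proof
  assume "has_walk V E a b (Suc n)"
  then obtain p where p: "walk V E p a b (Suc n)"
    unfolding has_walk_def by blast
  then have "walk V E (butlast p) a (p ! n) n" "{p ! n, b} \<in> E" "b \<in> V"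
    unfolding walk_def by (auto simp: nth_butlast dest: in_set_butlastD)
  then show "\<exists>c. has_walk V E a c n \<and> {c, b} \<in> E \<and> b \<in> V"
    unfolding has_walk_def by blast
next
  assume "\<exists>c. has_walk V E a c n \<and> {c, b} \<in> E \<and> b \<in> V"
  then obtain c p where "walk V E p a c n" "{c, b} \<in> E" "b \<in> V"
    unfolding has_walk_def by blast
  then have "walk V E (p @ [b]) a b (Suc n)"
    unfolding walk_def by (auto simp: nth_append less_Suc_eq)
  then show "has_walk V E a b (Suc n)"
    unfolding has_walk_def by blast
qed

lemma has_walk_in_V: "has_walk V E a b n \<Longrightarrow> a \<in> V \<and> b \<in> V"
  by (induction n arbitrary: b) (auto simp: has_walk_Suc)

lemma has_walk_edge: "{a, b} \<in> E \<Longrightarrow> a \<in> V \<Longrightarrow> b \<in> V \<Longrightarrow> has_walk V E a b 1"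
  by (simp add: has_walk_Suc)

lemma has_walk_trans: "has_walk V E a b m \<Longrightarrow> has_walk V E b c n \<Longrightarrow> has_walk V E a c (m + n)"
  by (induction n arbitrary: c) (auto simp: has_walk_Suc)

lemma has_walk_sym: "has_walk V E a b n \<Longrightarrow> has_walk V E b a n"
proof (induction n arbitrary: b)
  case (Suc n)
  then obtain c where c: "has_walk V E a c n" "{c, b} \<in> E" "b \<in> V"
    by (auto simp: has_walk_Suc)
  have "{b, c} \<in> E" "c \<in> V"
    using c(2) has_walk_in_V[OF c(1)] by (auto simp: insert_commute)
  with c have "has_walk V E b c 1"
    by (intro has_walk_edge)
  from has_walk_trans[OF this Suc.IH[OF c(1)]] show ?case
    by simp
qed simp

lemma dist_le: "has_walk V E a b n \<Longrightarrow> dist V E a b \<le> n"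
  unfolding dist_def has_walk_def by (auto intro: Least_le)

lemma has_walk_dist: "has_walk V E a b n \<Longrightarrow> has_walk V E a b (dist V E a b)"
  unfolding dist_def has_walk_def by (rule LeastI_ex) blast

lemma dist_sym: "dist V E a b = dist V E b a"
proof -
  have "has_walk V E a b n \<longleftrightarrow> has_walk V E b a n" for n
    using has_walk_sym[of V E a b n] has_walk_sym[of V E b a n] by blast
  then show ?thesis
    unfolding dist_def has_walk_def[symmetric] by simp
qed

lemma dist_self: "a \<in> V \<Longrightarrow> dist V E a a = 0"
  using dist_le[of V E a a 0] by simp

lemma dist_edge: "{a, b} \<in> E \<Longrightarrow> a \<noteq> b \<Longrightarrow> a \<in> V \<Longrightarrow> b \<in> V \<Longrightarrow> dist V E a b = 1"
  using dist_le[OF has_walk_edge] has_walk_dist[OF has_walk_edge]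
  by (metis has_walk_0 le_neq_implies_less less_one)

lemma connected_has_walk_dist:
  "connected V E \<Longrightarrow> a \<in> V \<Longrightarrow> b \<in> V \<Longrightarrow> has_walk V E a b (dist V E a b)"
  unfolding connected_def by (meson has_walk_def has_walk_dist)

lemma dist_edge_le:
  assumes "connected V E" "a \<in> V" "{b, c} \<in> E" "b \<in> V" "c \<in> V"
  shows "dist V E a b \<le> Suc (dist V E a c)"
  using assms connected_has_walk_dist[OF assms(1,2,5)]
  by (intro dist_le) (auto simp: has_walk_Suc insert_commute)

lemma dist_last_step:
  assumes "has_walk V E a b n" "a \<noteq> b"
  obtains c where "{c, b} \<in> E" "dist V E a b = Suc (dist V E a c)"
proof -
  obtain m where m: "dist V E a b = Suc m"
    using has_walk_dist[OF assms(1)] assms(2) by (cases "dist V E a b") auto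
  then obtain c where c: "has_walk V E a c m" "{c, b} \<in> E" "b \<in> V"
    using has_walk_dist[OF assms(1)] by (auto simp: has_walk_Suc)
  have "dist V E a b \<le> Suc (dist V E a c)"
    using c has_walk_dist[OF c(1)] by (intro dist_le) (auto simp: has_walk_Suc)
  with m dist_le[OF c(1)] have "dist V E a b = Suc (dist V E a c)"
    by linarith
  with c(2) show thesis by (rule that)
qed

lemma has_walk_potential_le:
  assumes "has_walk V E a b n" and "\<And>s t. {s, t} \<in> E \<Longrightarrow> h s \<le> Suc (h t)"
  shows "h b \<le> h a + n"
  using assms(1)
proof (induction n arbitrary: b)
  case (Suc n)
  then obtain c where "has_walk V E a c n" "{b, c} \<in> E"
    by (auto simp: has_walk_Suc insert_commute)
  with Suc.IH assms(2)[of b c] show ?case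
    by fastforce
qed simp

lemma dist_eq_potential:
  assumes "has_walk V E a b (h b)" and "h a = 0"
    and "\<And>s t. {s, t} \<in> E \<Longrightarrow> h s \<le> Suc (h t)"
  shows "dist V E a b = h b"
proof (rule antisym)
  show "dist V E a b \<le> h b"
    using assms(1) by (rule dist_le)
  show "h b \<le> dist V E a b"
    using has_walk_potential_le[of V E a b _ h] has_walk_dist[OF assms(1)] assms(2,3) by simp
qed

lemma graph_edge: "graph V E \<Longrightarrow> {x, y} \<in> E \<Longrightarrow> x \<noteq> y \<and> x \<in> V \<and> y \<in> V"
  unfolding graph_def by (fastforce simp: doubleton_eq_iff)

lemma graph_edge_other_end:
  "graph V E \<Longrightarrow> e \<in> E \<Longrightarrow> z \<in> e \<Longrightarrow> \<exists>z'. e = {z, z'} \<and> z \<in> V \<and> z' \<in> V"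
  unfolding graph_def by fastforce

lemma Theta_iff:
  assumes "{x, y} \<in> E" and "{u, v} \<in> E"
  shows "Theta V E {x, y} {u, v} \<longleftrightarrow> dist V E x u + dist V E y v \<noteq> dist V E x v + dist V E y u"
  using assms unfolding Theta_def by (auto simp: doubleton_eq_iff)

lemma subdiv_edge_iff:
  "{s, t} \<in> subdiv_E V E \<longleftrightarrow>
     (\<exists>z e. e \<in> E \<and> z \<in> e \<and> (s = Inl z \<and> t = Inr e \<or> s = Inr e \<and> t = Inl z))"
  unfolding subdiv_E_def by (auto simp: doubleton_eq_iff)

lemma has_walk_subdiv_edge:
  assumes "e \<in> E" "z \<in> e" "z \<in> V"
  shows "has_walk (subdiv_V V E) (subdiv_E V E) (Inl z) (Inr e) 1"
proof (rule has_walk_edge)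
  show "{Inl z, Inr e} \<in> subdiv_E V E"
    unfolding subdiv_E_def using assms(1,2) by blast
  show "Inl z \<in> subdiv_V V E" "Inr e \<in> subdiv_V V E"
    unfolding subdiv_V_def using assms(1,3) by auto
qed

lemma has_walk_subdiv_Inl:
  "has_walk V E a b n \<Longrightarrow> has_walk (subdiv_V V E) (subdiv_E V E) (Inl a) (Inl b) (2 * n)"
proof (induction n arbitrary: b)
  case 0
  then show ?case by (auto simp: subdiv_V_def)
next
  case (Suc n)
  then obtain c where c: "has_walk V E a c n" "{c, b} \<in> E" "b \<in> V"
    by (auto simp: has_walk_Suc)
  let ?S = "has_walk (subdiv_V V E) (subdiv_E V E)"
  have "?S (Inl c) (Inr {c, b}) 1"
    using c has_walk_in_V[OF c(1)] by (intro has_walk_subdiv_edge) auto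
  with Suc.IH[OF c(1)] have "?S (Inl a) (Inr {c, b}) (2 * n + 1)"
    by (rule has_walk_trans)
  moreover have "?S (Inr {c, b}) (Inl b) 1"
    using c by (intro has_walk_sym[OF has_walk_subdiv_edge]) auto
  ultimately have "?S (Inl a) (Inl b) (2 * n + 1 + 1)"
    by (rule has_walk_trans)
  then show ?case
    by simp
qed

definition subdiv_dist_from :: "'a set \<Rightarrow> 'a set set \<Rightarrow> 'a \<Rightarrow> 'a + 'a set \<Rightarrow> nat" where
  "subdiv_dist_from V E w t =
     (case t of Inl z \<Rightarrow> 2 * dist V E w z | Inr e \<Rightarrow> Suc (2 * Min (dist V E w ` e)))"

lemma subdiv_dist_from_Inl [simp]: "subdiv_dist_from V E w (Inl z) = 2 * dist V E w z"
  by (simp add: subdiv_dist_from_def)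

lemma subdiv_dist_from_Inr [simp]:
  "subdiv_dist_from V E w (Inr {p, q}) = Suc (2 * min (dist V E w p) (dist V E w q))"
  by (simp add: subdiv_dist_from_def)

lemma subdiv_dist_from_edge_le:
  assumes "graph V E" "connected V E" "w \<in> V" "{s, t} \<in> subdiv_E V E"
  shows "subdiv_dist_from V E w s \<le> Suc (subdiv_dist_from V E w t)"
proof -
  obtain z e where "e \<in> E" "z \<in> e" and st: "s = Inl z \<and> t = Inr e \<or> s = Inr e \<and> t = Inl z"
    using assms(4) unfolding subdiv_edge_iff by blast
  then obtain z' where e: "e = {z, z'}" "z \<in> V" "z' \<in> V"
    using graph_edge_other_end[OF assms(1)] by blast
  have "dist V E w z \<le> Suc (dist V E w z')" "dist V E w z' \<le> Suc (dist V E w z)"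
    using dist_edge_le[OF assms(2,3)] e \<open>e \<in> E\<close> by (auto simp: insert_commute)
  then show ?thesis
    using st e by auto
qed

lemma has_walk_subdiv_dist_from:
  assumes "graph V E" "connected V E" "w \<in> V" "t \<in> subdiv_V V E"
  shows "has_walk (subdiv_V V E) (subdiv_E V E) (Inl w) t (subdiv_dist_from V E w t)"
proof (cases t)
  case (Inl z)
  then have "z \<in> V"
    using assms(4) by (auto simp: subdiv_V_def)
  with Inl show ?thesis
    using has_walk_subdiv_Inl[OF connected_has_walk_dist[OF assms(2,3)]] by simp
next
  case (Inr e)
  then have "e \<in> E"
    using assms(4) by (auto simp: subdiv_V_def)
  then obtain p q where e: "e = {p, q}" "p \<in> V" "q \<in> V"
    using assms(1) unfolding graph_def by blast
  obtain z where z: "z \<in> e" "dist V E w z = min (dist V E w p) (dist V E w q)"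
    using e(1) by (cases "dist V E w p \<le> dist V E w q") auto
  have "z \<in> V"
    using z(1) e by auto
  have "has_walk (subdiv_V V E) (subdiv_E V E) (Inl w) (Inl z) (2 * dist V E w z)"
    using connected_has_walk_dist[OF assms(2,3) \<open>z \<in> V\<close>] by (rule has_walk_subdiv_Inl)
  from has_walk_trans[OF this has_walk_subdiv_edge[OF \<open>e \<in> E\<close> z(1) \<open>z \<in> V\<close>]]
  show ?thesis
    using Inr e(1) z(2) by simp
qed

lemma dist_subdiv_Inl:
  assumes "graph V E" "connected V E" "w \<in> V" "t \<in> subdiv_V V E"
  shows "dist (subdiv_V V E) (subdiv_E V E) (Inl w) t = subdiv_dist_from V E w t"
  using has_walk_subdiv_dist_from[OF assms] subdiv_dist_from_edge_le[OF assms(1-3)] assms(3)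
  by (intro dist_eq_potential) (simp_all add: dist_self)

lemma connected_subdiv:
  assumes "graph V E" "connected V E"
  shows "connected (subdiv_V V E) (subdiv_E V E)"
proof -
  obtain w where "w \<in> V"
    using assms(2) unfolding connected_def by blast
  let ?S = "has_walk (subdiv_V V E) (subdiv_E V E)"
  have "\<exists>n. ?S a b n" if "a \<in> subdiv_V V E" "b \<in> subdiv_V V E" for a b
    using has_walk_trans[OF has_walk_sym has_walk_subdiv_dist_from[OF assms \<open>w \<in> V\<close>]]
      has_walk_subdiv_dist_from[OF assms \<open>w \<in> V\<close>] that by blast
  then show ?thesis
    using \<open>w \<in> V\<close> unfolding connected_def has_walk_def subdiv_V_def by blast
qed

lemma dist_subdiv_Inr_Inr:
  assumes "graph V E" "connected V E" "e \<in> E" "{u, v} \<in> E" "e \<noteq> {u, v}"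
  shows "dist (subdiv_V V E) (subdiv_E V E) (Inr e) (Inr {u, v}) =
    Suc (min (subdiv_dist_from V E u (Inr e)) (subdiv_dist_from V E v (Inr e)))"
proof -
  let ?dS = "dist (subdiv_V V E) (subdiv_E V E)"
  have S: "connected (subdiv_V V E) (subdiv_E V E)"
    using connected_subdiv[OF assms(1,2)] .
  have in_S: "Inr e \<in> subdiv_V V E" "Inr {u, v} \<in> subdiv_V V E"
    using assms(3,4) by (auto simp: subdiv_V_def)
  have uv: "u \<in> V" "v \<in> V"
    using graph_edge[OF assms(1,4)] by auto
  have to_end: "?dS (Inr e) (Inl z) = subdiv_dist_from V E z (Inr e)" if "z \<in> {u, v}" for z
    using dist_subdiv_Inl[OF assms(1,2) _ in_S(1), of z] dist_sym[of _ _ "Inr e" "Inl z"] that uv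
    by auto
  have upper: "?dS (Inr e) (Inr {u, v}) \<le> Suc (?dS (Inr e) (Inl z))" if "z \<in> {u, v}" for z
  proof (rule dist_edge_le[OF S in_S(1)])
    show "{Inr {u, v}, Inl z} \<in> subdiv_E V E" "Inl z \<in> subdiv_V V E"
      using that assms(4) uv by (auto simp: subdiv_E_def subdiv_V_def)
  qed (rule in_S(2))
  obtain c where c: "{c, Inr {u, v}} \<in> subdiv_E V E" "?dS (Inr e) (Inr {u, v}) = Suc (?dS (Inr e) c)"
    using dist_last_step[OF connected_has_walk_dist[OF S in_S]] assms(5) by blast
  then obtain z where "z \<in> {u, v}" "c = Inl z"
    unfolding subdiv_edge_iff by blast
  with c(2) upper[of u] upper[of v] to_end[of u] to_end[of v] show ?thesis
    by auto
qed

lemma Theta_refl: "graph V E \<Longrightarrow> {x, y} \<in> E \<Longrightarrow> Theta V E {x, y} {x, y}"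
  using dist_edge[of x y E V] dist_self[of x V E] dist_self[of y V E] graph_edge[of V E x y]
  by (simp add: Theta_iff dist_sym[of V E y x])

lemma Theta_subdiv_iff:
  assumes "graph V E" "connected V E" "{x, y} \<in> E" "{u, v} \<in> E" "{x, y} \<noteq> {u, v}"
  defines "d \<equiv> dist V E"
  shows "Theta (subdiv_V V E) (subdiv_E V E) {Inl x, Inr {x, y}} {Inl u, Inr {u, v}} \<longleftrightarrow>
    d x u + min (min (d x u) (d y u)) (min (d x v) (d y v)) \<noteq> min (d x u) (d x v) + min (d x u) (d y u)"
proof -
  let ?dS = "dist (subdiv_V V E) (subdiv_E V E)"
  have x: "x \<in> V" "y \<in> V" and u: "u \<in> V" "v \<in> V"
    using graph_edge[OF assms(1,3)] graph_edge[OF assms(1,4)] by auto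
  have "{Inl x, Inr {x, y}} \<in> subdiv_E V E" "{Inl u, Inr {u, v}} \<in> subdiv_E V E"
    using assms(3,4) by (auto simp: subdiv_E_def)
  then have "Theta (subdiv_V V E) (subdiv_E V E) {Inl x, Inr {x, y}} {Inl u, Inr {u, v}} \<longleftrightarrow>
      ?dS (Inl x) (Inl u) + ?dS (Inr {x, y}) (Inr {u, v}) \<noteq>
      ?dS (Inl x) (Inr {u, v}) + ?dS (Inl u) (Inr {x, y})"
    by (simp add: Theta_iff dist_sym[of _ _ "Inr {x, y}" "Inl u"])
  moreover have "Inl u \<in> subdiv_V V E" "Inl x \<in> subdiv_V V E"
    "Inr {x, y} \<in> subdiv_V V E" "Inr {u, v} \<in> subdiv_V V E"
    using x u assms(3,4) by (auto simp: subdiv_V_def)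
  ultimately show ?thesis
    using x u by (simp add: d_def dist_subdiv_Inl dist_subdiv_Inr_Inr assms(1-5)
        dist_sym[of V E u] dist_sym[of V E v] flip: nat_mult_min_right)
    arith
qed

(* Over the integers put b = a + s, c = a + t, d = a + s + t: both sides equal 2a + min 0 s + min 0 t. *)
lemma add_min_min_eq:
  fixes a b c d :: nat
  assumes "a + d = b + c"
  shows "a + min (min a c) (min b d) = min a b + min a c"
  using assms by (simp add: min_def)

theorem lemma3p1:
  fixes V :: "'a set" and E :: "'a set set" and x y u v :: 'a
  assumes "graph V E" and "connected V E"
    and "{x, y} \<in> E" and "{u, v} \<in> E"
    and "Theta (subdiv_V V E) (subdiv_E V E) {Inl x, Inr {x, y}} {Inl u, Inr {u, v}}"
  shows "Theta V E {x, y} {u, v}"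
proof (cases "{x, y} = {u, v}")
  case True
  then show ?thesis
    using Theta_refl[OF assms(1,3)] by simp
next
  case False
  let ?d = "dist V E"
  have "?d x u + min (min (?d x u) (?d y u)) (min (?d x v) (?d y v)) \<noteq>
      min (?d x u) (?d x v) + min (?d x u) (?d y u)"
    using assms False by (simp add: Theta_subdiv_iff)
  then have "?d x u + ?d y v \<noteq> ?d x v + ?d y u"
    using add_min_min_eq by blast
  with assms(3,4) show ?thesis
    by (simp add: Theta_iff)
qed

end
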